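(* Let $\Delta,\Sigma$ be alphabets, $\varphi:\Delta\to2^{\Sigma^*}$ a regular language substitution, and $K_1,K_2\subseteq\Delta^+$ regular languages such that $\mathcal{R}_1=(K_1,\varphi)$ and $\mathcal{R}_2=(K_2,\varphi)$ are finite. Then $\mathcal{R}_1\cap\mathcal{R}_2$ is a finite rational set of regular languages that can be expressed with the language substitution $\varphi$, i.e. $\mathcal{R}_1\cap\mathcal{R}_2=(K_3,\varphi)$ for some regular $K_3\subseteq\Delta^+$.
   Context: A regular language substitution $\varphi:\Delta\to2^{\Sigma^*}$ maps each symbol to a regular language over $\Sigma$, extended by $\varphi(\delta w)=\varphi(\delta)\varphi(w)$. For $K\subseteq\Delta^+$, $(K,\varphi)=\{\varphi(w)\mid w\in K\}$; when $K$ is regular this set is a rational set of regular languages. Intersection is the ordinary set intersection of the two sets of languages. *)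

theory Defs
  imports Main
begin

definition conc :: "'a list set \<Rightarrow> 'a list set \<Rightarrow> 'a list set" where
  "conc A B = {u @ v | u v. u \<in> A \<and> v \<in> B}"

primrec lpow :: "'a list set \<Rightarrow> nat \<Rightarrow> 'a list set" where
  "lpow A 0 = {[]}"
| "lpow A (Suc n) = conc A (lpow A n)"

definition kstar :: "'a list set \<Rightarrow> 'a list set" where
  "kstar A = (\<Union>n. lpow A n)"

text \<open>Regular languages: the smallest class containing the finite basic languages and
  closed under union, concatenation and Kleene star (Kleene's theorem).\<close>
inductive regular :: "'a list set \<Rightarrow> bool" where
  reg_empty: "regular {}"
| reg_eps: "regular {[]}"
| reg_sym: "regular {[a]}"
| reg_union: "regular A \<Longrightarrow> regular B \<Longrightarrow> regular (A \<union> B)"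
| reg_conc: "regular A \<Longrightarrow> regular B \<Longrightarrow> regular (conc A B)"
| reg_star: "regular A \<Longrightarrow> regular (kstar A)"

primrec lsubst :: "('d \<Rightarrow> 's list set) \<Rightarrow> 'd list \<Rightarrow> 's list set" where
  "lsubst \<phi> [] = {[]}"
| "lsubst \<phi> (d # w) = conc (\<phi> d) (lsubst \<phi> w)"

definition regular_subst :: "('d \<Rightarrow> 's list set) \<Rightarrow> bool" where
  "regular_subst \<phi> \<longleftrightarrow> (\<forall>d. regular (\<phi> d))"

definition ratset :: "'d list set \<Rightarrow> ('d \<Rightarrow> 's list set) \<Rightarrow> 's list set set" where
  "ratset K \<phi> = lsubst \<phi> ` K"

end

theory Submission
  imports Defs
begin

text \<open>Every language in the intersection is the image of some word of \<open>K1\<close>; choosing one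
  such word per language gives a finite, hence regular, subset \<open>K3\<close> of \<open>K1\<close> whose image is
  exactly the intersection.\<close>

lemma regular_singleton: "regular {w}"
proof (induction w)
  case Nil
  show ?case by (rule reg_eps)
next
  case (Cons a w)
  have "{a # w} = conc {[a]} {w}" by (auto simp: conc_def)
  then show ?case using reg_conc[OF reg_sym Cons] by simp
qed

lemma regular_finite: "finite A \<Longrightarrow> regular A"
proof (induction A rule: finite_induct)
  case empty
  show ?case by (rule reg_empty)
next
  case (insert w A)
  then show ?case using reg_union[OF regular_singleton] by (metis insert_is_Un)
qed

lemma finite_subset_ratset:
  assumes "finite R" and "R \<subseteq> ratset K \<phi>"
  obtains K' where "finite K'" and "K' \<subseteq> K" and "ratset K' \<phi> = R"
  using finite_subset_image[OF assms[unfolded ratset_def]] that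
  by (auto simp: ratset_def)

theorem proposition7:
  fixes \<phi> :: "'d::finite \<Rightarrow> 's::finite list set"
    and K1 K2 :: "'d list set"
  assumes "regular_subst \<phi>"
    and "regular K1" and "K1 \<subseteq> {w. w \<noteq> []}"
    and "regular K2" and "K2 \<subseteq> {w. w \<noteq> []}"
    and "finite (ratset K1 \<phi>)" and "finite (ratset K2 \<phi>)"
  shows "\<exists>K3 :: 'd list set. regular K3 \<and> K3 \<subseteq> {w. w \<noteq> []} \<and>
           finite (ratset K1 \<phi> \<inter> ratset K2 \<phi>) \<and>
           ratset K1 \<phi> \<inter> ratset K2 \<phi> = ratset K3 \<phi>"
proof -
  let ?R = "ratset K1 \<phi> \<inter> ratset K2 \<phi>"
  have finite_R: "finite ?R" using \<open>finite (ratset K1 \<phi>)\<close> by simp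
  then obtain K3 where "finite K3" "K3 \<subseteq> K1" "ratset K3 \<phi> = ?R"
    by (rule finite_subset_ratset) blast
  moreover from \<open>finite K3\<close> have "regular K3" by (rule regular_finite)
  moreover from \<open>K3 \<subseteq> K1\<close> have "K3 \<subseteq> {w. w \<noteq> []}" using \<open>K1 \<subseteq> {w. w \<noteq> []}\<close> by blast
  ultimately show ?thesis using finite_R by blast
qed

end
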